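(* Let $(A,+,\circ)$ be a skew brace of abelian type (possibly infinite). The following are equivalent: (i) $A$ is $*$-nilpotent; (ii) $A$ is right $*$-nilpotent and $(A,\circ)$ is nilpotent; (iii) $A$ is centrally nilpotent.
   Context: A skew brace is a triple $(A,+,\circ)$ where $(A,+)$ and $(A,\circ)$ are groups (written additively for $+$) such that $x\circ(y+z)=(x\circ y)-x+(x\circ z)$ for all $x,y,z\in A$; the common neutral element is $0$. It is of abelian type if $(A,+)$ is abelian. Let $\lambda_x(y)=-x+(x\circ y)$ and $x*y=\lambda_x(y)-y$; $[x,y]_+=x+y-x-y$. For subsets $X,Y$, $X*Y$ is the subgroup of $(A,+)$ generated by $\{x*y\}$. Left and right series: $A^1=A$, $A^{n+1}=A*A^n$; $A^{(1)}=A$, $A^{(n+1)}=A^{(n)}*A$. $A$ is left (resp. right) $*$-nilpotent if $A^n=0$ (resp. $A^{(n)}=0$) for some $n$, and $*$-nilpotent if both. An ideal is a subgroup $I$ of $(A,+)$ with $\lambda_a(I)\subseteq I$ for all $a\in A$ that is normal in both $(A,+)$ and $(A,\circ)$. The center is $\zeta(A)=\{x\in A: x*y=y*x=[x,y]_+=0\ \forall y\in A\}$. $A$ is centrally nilpotent if there is a chain of ideals $0=I_0\leq\dots\leq I_n=A$ with $I_{j+1}/I_j\leq\zeta(A/I_j)$ for all $j$. *)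

theory Defs
  imports "HOL-Algebra.Algebra"
begin

text \<open>A skew brace of abelian type: the additive group is the ambient type
  (of class ab_group_add), the multiplicative group is given by circ.\<close>

definition circ_group :: "('a::ab_group_add \<Rightarrow> 'a \<Rightarrow> 'a) \<Rightarrow> 'a monoid" where
  "circ_group circ = \<lparr>carrier = UNIV, monoid.mult = circ, one = 0\<rparr>"

definition skew_brace_abelian :: "('a::ab_group_add \<Rightarrow> 'a \<Rightarrow> 'a) \<Rightarrow> bool" where
  "skew_brace_abelian circ \<longleftrightarrow> group (circ_group circ) \<and>
     (\<forall>x y z. circ x (y + z) = circ x y - x + circ x z)"

definition lam :: "('a::ab_group_add \<Rightarrow> 'a \<Rightarrow> 'a) \<Rightarrow> 'a \<Rightarrow> 'a \<Rightarrow> 'a" where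
  "lam circ x y = - x + circ x y"

definition star :: "('a::ab_group_add \<Rightarrow> 'a \<Rightarrow> 'a) \<Rightarrow> 'a \<Rightarrow> 'a \<Rightarrow> 'a" where
  "star circ x y = lam circ x y - y"

definition add_subgroup :: "'a::ab_group_add set \<Rightarrow> bool" where
  "add_subgroup H \<longleftrightarrow> 0 \<in> H \<and> (\<forall>x\<in>H. \<forall>y\<in>H. x + y \<in> H \<and> - x \<in> H)"

definition add_gen :: "'a::ab_group_add set \<Rightarrow> 'a set" where
  "add_gen S = \<Inter>{H. add_subgroup H \<and> S \<subseteq> H}"

definition star_set :: "('a::ab_group_add \<Rightarrow> 'a \<Rightarrow> 'a) \<Rightarrow> 'a set \<Rightarrow> 'a set \<Rightarrow> 'a set" where
  "star_set circ P Q = add_gen ((\<lambda>(u, v). star circ u v) ` (P \<times> Q))"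

text \<open>left_series circ n is A^(n+1) and right_series circ n is A^((n+1)).\<close>
fun left_series :: "('a::ab_group_add \<Rightarrow> 'a \<Rightarrow> 'a) \<Rightarrow> nat \<Rightarrow> 'a set" where
  "left_series circ 0 = UNIV"
| "left_series circ (Suc n) = star_set circ UNIV (left_series circ n)"

fun right_series :: "('a::ab_group_add \<Rightarrow> 'a \<Rightarrow> 'a) \<Rightarrow> nat \<Rightarrow> 'a set" where
  "right_series circ 0 = UNIV"
| "right_series circ (Suc n) = star_set circ (right_series circ n) UNIV"

definition left_star_nilpotent :: "('a::ab_group_add \<Rightarrow> 'a \<Rightarrow> 'a) \<Rightarrow> bool" where
  "left_star_nilpotent circ \<longleftrightarrow> (\<exists>n. left_series circ n = {0})"

definition right_star_nilpotent :: "('a::ab_group_add \<Rightarrow> 'a \<Rightarrow> 'a) \<Rightarrow> bool" where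
  "right_star_nilpotent circ \<longleftrightarrow> (\<exists>n. right_series circ n = {0})"

definition star_nilpotent :: "('a::ab_group_add \<Rightarrow> 'a \<Rightarrow> 'a) \<Rightarrow> bool" where
  "star_nilpotent circ \<longleftrightarrow> left_star_nilpotent circ \<and> right_star_nilpotent circ"

fun lower_central :: "('g, 'b) monoid_scheme \<Rightarrow> nat \<Rightarrow> 'g set" where
  "lower_central G 0 = carrier G"
| "lower_central G (Suc n) = generate G
     {x \<otimes>\<^bsub>G\<^esub> y \<otimes>\<^bsub>G\<^esub> inv\<^bsub>G\<^esub> x \<otimes>\<^bsub>G\<^esub> inv\<^bsub>G\<^esub> y | x y. x \<in> carrier G \<and> y \<in> lower_central G n}"

definition nilpotent_group :: "('g, 'b) monoid_scheme \<Rightarrow> bool" where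
  "nilpotent_group G \<longleftrightarrow> group G \<and> (\<exists>n. lower_central G n = {\<one>\<^bsub>G\<^esub>})"

definition brace_ideal :: "('a::ab_group_add \<Rightarrow> 'a \<Rightarrow> 'a) \<Rightarrow> 'a set \<Rightarrow> bool" where
  "brace_ideal circ I \<longleftrightarrow> add_subgroup I \<and> (\<forall>a. \<forall>x\<in>I. lam circ a x \<in> I)
     \<and> (\<forall>a. \<forall>x\<in>I. a + x - a \<in> I) \<and> I \<lhd> circ_group circ"

text \<open>x + I lies in the centre of A/I, written out elementwise.\<close>
definition central_mod :: "('a::ab_group_add \<Rightarrow> 'a \<Rightarrow> 'a) \<Rightarrow> 'a set \<Rightarrow> 'a \<Rightarrow> bool" where
  "central_mod circ I x \<longleftrightarrow>
     (\<forall>y. star circ x y \<in> I \<and> star circ y x \<in> I \<and> x + y - x - y \<in> I)"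

definition centrally_nilpotent :: "('a::ab_group_add \<Rightarrow> 'a \<Rightarrow> 'a) \<Rightarrow> bool" where
  "centrally_nilpotent circ \<longleftrightarrow> (\<exists>n (I :: nat \<Rightarrow> 'a set).
     I 0 = {0} \<and> I n = UNIV \<and> (\<forall>j\<le>n. brace_ideal circ (I j)) \<and>
     (\<forall>j<n. I j \<subseteq> I (Suc j) \<and> (\<forall>x\<in>I (Suc j). central_mod circ (I j) x)))"

end

theory Submission
  imports Defs
begin

text \<open>A central series \<open>0 = I\<^sub>0 \<le> \<dots> \<le> I\<^sub>n = A\<close> pushes each of the left series,
  the right series and the lower central series of \<open>(A,\<circ>)\<close> one step down the chain,
  since \<open>x * y\<close>, \<open>y * x\<close> and the \<open>\<circ>\<close>-commutator of a central element lie in the next ideal.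
  Conversely, the right series consists of ideals \<open>A\<^bsup>(i)\<^esup>\<close> with
  \<open>A\<^bsup>(i)\<^esup> * A \<subseteq> A\<^bsup>(i+1)\<^esup>\<close>. If for \<open>M = A\<^bsup>(i)\<^esup>\<close> and \<open>N = A\<^bsup>(i+1)\<^esup>\<close> some left power
  \<open>A * (\<dots> * (A * M))\<close> lies in \<open>N\<close>, then the ideals \<open>N + A * (\<dots> * (A * M))\<close> refine
  \<open>N \<le> M\<close> into central steps, and gluing these refinements gives a central series.
  Such a left power exists if \<open>A\<close> is left \<open>*\<close>-nilpotent, and also if \<open>(A,\<circ>)\<close> is
  nilpotent: modulo \<open>N\<close>, \<open>y * g\<close> agrees with the commutator of \<open>y\<close> and \<open>g \<in> M\<close>, so the
  \<open>k\<close>-th left power lies in \<open>\<gamma>\<^sub>k(A,\<circ>) + N\<close>.\<close>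

lemma add_subgroup_zero: "add_subgroup H \<Longrightarrow> 0 \<in> H"
  unfolding add_subgroup_def by auto

lemma add_subgroup_add: "add_subgroup H \<Longrightarrow> x \<in> H \<Longrightarrow> y \<in> H \<Longrightarrow> x + y \<in> H"
  unfolding add_subgroup_def by auto

lemma add_subgroup_minus: "add_subgroup H \<Longrightarrow> x \<in> H \<Longrightarrow> - x \<in> H"
  unfolding add_subgroup_def by auto

lemma add_subgroup_diff: "add_subgroup H \<Longrightarrow> x \<in> H \<Longrightarrow> y \<in> H \<Longrightarrow> x - y \<in> H"
  using add_subgroup_add[of H x "- y"] add_subgroup_minus[of H y] by simp

lemma add_subgroup_add_cancel_left: "add_subgroup H \<Longrightarrow> x + y \<in> H \<Longrightarrow> x \<in> H \<Longrightarrow> y \<in> H"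
  using add_subgroup_diff[of H "x + y" x] by simp

lemma add_subgroup_UNIV: "add_subgroup UNIV"
  unfolding add_subgroup_def by auto

lemma add_subgroup_singleton_zero: "add_subgroup {0::'a::ab_group_add}"
  unfolding add_subgroup_def by auto

lemma add_subgroup_add_gen: "add_subgroup (add_gen S)"
  unfolding add_gen_def add_subgroup_def by auto

lemma add_gen_superset: "S \<subseteq> add_gen S"
  unfolding add_gen_def by auto

lemma add_gen_least: "add_subgroup H \<Longrightarrow> S \<subseteq> H \<Longrightarrow> add_gen S \<subseteq> H"
  unfolding add_gen_def by auto

lemma add_gen_induct:
  assumes "x \<in> add_gen S" "add_subgroup {x. P x}" "\<And>s. s \<in> S \<Longrightarrow> P s"
  shows "P x"
  using add_gen_least[OF assms(2)] assms(1,3) by blast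

lemma add_subgroup_star_set: "add_subgroup (star_set circ P Q)"
  unfolding star_set_def by (rule add_subgroup_add_gen)

lemma star_set_mem: "p \<in> P \<Longrightarrow> q \<in> Q \<Longrightarrow> star circ p q \<in> star_set circ P Q"
  unfolding star_set_def using add_gen_superset by fastforce

lemma star_set_least:
  "add_subgroup H \<Longrightarrow> (\<And>p q. p \<in> P \<Longrightarrow> q \<in> Q \<Longrightarrow> star circ p q \<in> H) \<Longrightarrow> star_set circ P Q \<subseteq> H"
  unfolding star_set_def by (rule add_gen_least) auto

lemma star_set_mono: "P \<subseteq> P' \<Longrightarrow> Q \<subseteq> Q' \<Longrightarrow> star_set circ P Q \<subseteq> star_set circ P' Q'"
  by (rule star_set_least[OF add_subgroup_star_set]) (auto intro: star_set_mem)

lemma star_set_induct: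
  assumes "x \<in> star_set circ P Q" "add_subgroup {x. R x}"
    "\<And>p q. p \<in> P \<Longrightarrow> q \<in> Q \<Longrightarrow> R (star circ p q)"
  shows "R x"
  using star_set_least[OF assms(2), where circ = circ and P = P and Q = Q] assms(1,3) by blast

lemma zero_mem_left_series: "0 \<in> left_series circ k"
  by (cases k) (simp_all add: add_subgroup_zero[OF add_subgroup_star_set])

lemma zero_mem_right_series: "0 \<in> right_series circ k"
  by (cases k) (simp_all add: add_subgroup_zero[OF add_subgroup_star_set])

definition plus_set :: "'a::ab_group_add set \<Rightarrow> 'a set \<Rightarrow> 'a set" where
  "plus_set N S = {u + v |u v. u \<in> N \<and> v \<in> S}"

lemma plus_setI: "u \<in> N \<Longrightarrow> v \<in> S \<Longrightarrow> u + v \<in> plus_set N S"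
  unfolding plus_set_def by blast

lemma plus_setE:
  assumes "y \<in> plus_set N S"
  obtains u v where "y = u + v" "u \<in> N" "v \<in> S"
  using assms unfolding plus_set_def by blast

lemma plus_set_mono: "S \<subseteq> T \<Longrightarrow> plus_set N S \<subseteq> plus_set N T"
  unfolding plus_set_def by blast

lemma plus_set_subset: "add_subgroup H \<Longrightarrow> N \<subseteq> H \<Longrightarrow> S \<subseteq> H \<Longrightarrow> plus_set N S \<subseteq> H"
  by (auto elim!: plus_setE intro: add_subgroup_add)

lemma plus_set_superset_left: "0 \<in> S \<Longrightarrow> N \<subseteq> plus_set N S"
  using plus_setI[of _ N 0 S] by auto

lemma plus_set_superset_right: "0 \<in> N \<Longrightarrow> S \<subseteq> plus_set N S"
  using plus_setI[of 0 N _ S] by auto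

lemma add_subgroup_plus_set:
  assumes N: "add_subgroup N" and S: "add_subgroup S"
  shows "add_subgroup (plus_set N S)"
  unfolding add_subgroup_def
proof (intro conjI ballI)
  show "0 \<in> plus_set N S"
    using plus_setI[OF add_subgroup_zero[OF N] add_subgroup_zero[OF S]] by simp
  fix x y assume "x \<in> plus_set N S" "y \<in> plus_set N S"
  then obtain u v u' v' where "x = u + v" "y = u' + v'" "u \<in> N" "v \<in> S" "u' \<in> N" "v' \<in> S"
    by (auto elim!: plus_setE)
  moreover have "x + y = (u + u') + (v + v')" "- x = (- u) + (- v)"
    using calculation by (simp_all add: algebra_simps)
  ultimately show "x + y \<in> plus_set N S" "- x \<in> plus_set N S"
    by (metis plus_setI add_subgroup_add add_subgroup_minus N S)+
qed

lemma subset_chain_descent: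
  fixes S I :: "nat \<Rightarrow> 'b set"
  assumes "S 0 \<subseteq> I n"
    and step: "\<And>k j. j < n \<Longrightarrow> S k \<subseteq> I (Suc j) \<Longrightarrow> S (Suc k) \<subseteq> I j"
  shows "S n \<subseteq> I 0"
proof -
  have "S k \<subseteq> I (n - k)" if "k \<le> n" for k
    using that
  proof (induction k)
    case (Suc k)
    then have "n - Suc k < n" "Suc (n - Suc k) = n - k" by auto
    with Suc show ?case using step by (metis Suc_leD)
  qed (use assms in simp)
  from this[of n] show ?thesis by simp
qed

fun left_star_power :: "('a::ab_group_add \<Rightarrow> 'a \<Rightarrow> 'a) \<Rightarrow> nat \<Rightarrow> 'a set \<Rightarrow> 'a set" where
  "left_star_power circ 0 M = M"
| "left_star_power circ (Suc k) M = star_set circ UNIV (left_star_power circ k M)"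

lemma left_star_power_subset_left_series: "left_star_power circ k M \<subseteq> left_series circ k"
  by (induction k) (simp_all add: star_set_mono)

definition has_central_series :: "('a::ab_group_add \<Rightarrow> 'a \<Rightarrow> 'a) \<Rightarrow> 'a set \<Rightarrow> bool" where
  "has_central_series circ K \<longleftrightarrow> (\<exists>n (I :: nat \<Rightarrow> 'a set).
     I 0 = {0} \<and> I n = K \<and> (\<forall>j\<le>n. brace_ideal circ (I j)) \<and>
     (\<forall>j<n. I j \<subseteq> I (Suc j) \<and> (\<forall>x\<in>I (Suc j). central_mod circ (I j) x)))"

lemma centrally_nilpotent_iff_has_central_series:
  "centrally_nilpotent circ \<longleftrightarrow> has_central_series circ UNIV"
  unfolding has_central_series_def centrally_nilpotent_def by simp

lemma has_central_series_extend:
  assumes "has_central_series circ K" "brace_ideal circ L" "K \<subseteq> L"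
    "\<And>y. y \<in> L \<Longrightarrow> central_mod circ K y"
  shows "has_central_series circ L"
proof -
  obtain n I where I: "I 0 = {0}" "I n = K" "\<forall>j\<le>n. brace_ideal circ (I j)"
     "\<forall>j<n. I j \<subseteq> I (Suc j) \<and> (\<forall>x\<in>I (Suc j). central_mod circ (I j) x)"
    using assms(1) unfolding has_central_series_def by blast
  define J where "J j = (if j \<le> n then I j else L)" for j
  have "\<forall>j<Suc n. J j \<subseteq> J (Suc j) \<and> (\<forall>x\<in>J (Suc j). central_mod circ (J j) x)"
    using I(2,4) assms(3,4) by (auto simp: J_def less_Suc_eq)
  moreover have "J 0 = {0}" "J (Suc n) = L" "\<forall>j\<le>Suc n. brace_ideal circ (J j)"
    using I(1,3) assms(2) by (auto simp: J_def)
  ultimately show ?thesis unfolding has_central_series_def by blast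
qed

locale abelian_skew_brace =
  fixes circ :: "'a::ab_group_add \<Rightarrow> 'a \<Rightarrow> 'a"
  assumes skew_brace: "skew_brace_abelian circ"
begin

abbreviation G where "G \<equiv> circ_group circ"

abbreviation circ_inv where "circ_inv x \<equiv> inv\<^bsub>G\<^esub> x"

lemma group_G: "group G"
  using skew_brace unfolding skew_brace_abelian_def by auto

lemma circ_add_distrib: "circ x (y + z) = circ x y - x + circ x z"
  using skew_brace unfolding skew_brace_abelian_def by auto

lemma G_simps [simp]: "carrier G = UNIV" "x \<otimes>\<^bsub>G\<^esub> y = circ x y" "\<one>\<^bsub>G\<^esub> = 0"
  by (simp_all add: circ_group_def)

lemma circ_assoc: "circ (circ x y) z = circ x (circ y z)"
  using monoid.m_assoc[OF group.is_monoid[OF group_G], of x y z] by simp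

lemma circ_zero_right [simp]: "circ x 0 = x"
  using monoid.r_one[OF group.is_monoid[OF group_G], of x] by simp

lemma circ_zero_left [simp]: "circ 0 x = x"
  using monoid.l_one[OF group.is_monoid[OF group_G], of x] by simp

lemma circ_inv_right [simp]: "circ x (circ_inv x) = 0"
  using group.r_inv[OF group_G, of x] by simp

lemma circ_inv_left [simp]: "circ (circ_inv x) x = 0"
  using group.l_inv[OF group_G, of x] by simp

lemma circ_eq_add_lam: "circ x y = x + lam circ x y"
  unfolding lam_def by simp

lemma lam_add: "lam circ x (y + z) = lam circ x y + lam circ x z"
  unfolding lam_def by (simp add: circ_add_distrib algebra_simps)

lemma lam_zero [simp]: "lam circ x 0 = 0"
  using lam_add[of x 0 0] by simp

lemma lam_minus: "lam circ x (- y) = - lam circ x y"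
  using minus_unique[of "lam circ x y" "lam circ x (- y)"] lam_add[of x y "- y"] by simp

lemma lam_diff: "lam circ x (y - z) = lam circ x y - lam circ x z"
  using lam_add[of x y "- z"] lam_minus[of x z] by simp

lemma lam_zero_left [simp]: "lam circ 0 z = z"
  unfolding lam_def by simp

lemma lam_circ: "lam circ (circ x y) z = lam circ x (lam circ y z)"
proof -
  have "circ x (circ y z) = circ x y - x + circ x (lam circ y z)"
    using circ_add_distrib[of x y "lam circ y z"] by (simp add: circ_eq_add_lam[of y z])
  then show ?thesis unfolding lam_def using circ_assoc[of x y z] by (simp add: algebra_simps)
qed

lemma lam_lam_inv: "lam circ a (lam circ (circ_inv a) x) = x"
  by (metis lam_circ circ_inv_right lam_zero_left)

lemma circ_inv_eq: "circ_inv x = - lam circ (circ_inv x) x"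
  using circ_inv_left[of x] unfolding circ_eq_add_lam[of "circ_inv x" x]
  by (simp add: eq_neg_iff_add_eq_0)

lemma circ_eq_add_star: "circ x y = x + y + star circ x y"
  unfolding star_def lam_def by simp

lemma lam_eq_add_star: "lam circ x y = y + star circ x y"
  unfolding star_def by simp

lemma star_add: "star circ x (y + z) = star circ x y + star circ x z"
  unfolding star_def by (simp add: lam_add)

lemma star_diff: "star circ x (y - z) = star circ x y - star circ x z"
  unfolding star_def by (simp add: lam_diff)

lemma star_zero_left [simp]: "star circ 0 x = 0"
  unfolding star_def by simp

lemma lam_star: "lam circ a (star circ y x) = star circ (circ a y) x - star circ a x"
  unfolding star_def by (simp add: lam_diff lam_circ)

lemma star_circ_left:
  "star circ (circ x y) z = star circ x (star circ y z) + star circ x z + star circ y z"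
  by (simp add: star_def lam_circ lam_diff algebra_simps)

lemma add_circ_inv: "g + circ_inv g = - star circ g (circ_inv g)"
  using circ_inv_right[of g] unfolding circ_eq_add_star[of g "circ_inv g"]
  by (simp add: eq_neg_iff_add_eq_0)

lemma conj_eq_lam: "circ (circ a z) (circ_inv a) = lam circ a (z + star circ z (circ_inv a))"
proof -
  have "circ (circ a z) (circ_inv a) = a + lam circ a (z + lam circ z (circ_inv a))"
    unfolding circ_assoc circ_eq_add_lam[of z] by (rule circ_eq_add_lam)
  also have "\<dots> = (a + lam circ a (circ_inv a)) + lam circ a (z + star circ z (circ_inv a))"
    by (simp add: lam_eq_add_star[of z] lam_add algebra_simps)
  also have "a + lam circ a (circ_inv a) = 0"
    using circ_inv_right[of a] by (simp add: circ_eq_add_lam)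
  finally show ?thesis by simp
qed

lemma lam_add_gen:
  assumes "x \<in> add_gen S" "\<And>s. s \<in> S \<Longrightarrow> lam circ a s \<in> add_gen S"
  shows "lam circ a x \<in> add_gen S"
proof (rule add_gen_induct[OF assms(1)])
  show "add_subgroup {x. lam circ a x \<in> add_gen S}"
    unfolding add_subgroup_def using add_subgroup_add_gen
    by (auto simp: lam_add lam_minus add_subgroup_def)
qed (rule assms(2))

lemma lam_star_set:
  assumes "x \<in> star_set circ P Q"
    "\<And>p q. p \<in> P \<Longrightarrow> q \<in> Q \<Longrightarrow> lam circ a (star circ p q) \<in> star_set circ P Q"
  shows "lam circ a x \<in> star_set circ P Q"
  using lam_add_gen[of x _ a] assms unfolding star_set_def by force

lemma lam_star_set_UNIV_left:
  "x \<in> star_set circ UNIV S \<Longrightarrow> lam circ a x \<in> star_set circ UNIV S"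
  by (erule lam_star_set)
    (auto simp: lam_star intro!: add_subgroup_diff[OF add_subgroup_star_set] star_set_mem)

text \<open>Normality in \<open>(A,\<circ>)\<close> need not be checked: since the conjugate of \<open>h\<close> by \<open>a\<close> is
  \<open>\<lambda>\<^sub>a(h + h * a\<^sup>-\<^sup>1)\<close>, it follows from closure under \<open>\<lambda>\<close> and under \<open>x \<mapsto> x * a\<close>.\<close>

lemma brace_idealI:
  assumes I: "add_subgroup I" and lam: "\<And>a x. x \<in> I \<Longrightarrow> lam circ a x \<in> I"
    and star: "\<And>x a. x \<in> I \<Longrightarrow> star circ x a \<in> I"
  shows "brace_ideal circ I"
proof -
  have "subgroup I G"
  proof
    show "x \<otimes>\<^bsub>G\<^esub> y \<in> I" if "x \<in> I" "y \<in> I" for x y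
      using that add_subgroup_add[OF I] lam by (simp add: circ_eq_add_lam)
    show "circ_inv x \<in> I" if "x \<in> I" for x
      using that circ_inv_eq[of x] add_subgroup_minus[OF I] lam by metis
  qed (use add_subgroup_zero[OF I] in auto)
  moreover have "x \<otimes>\<^bsub>G\<^esub> h \<otimes>\<^bsub>G\<^esub> circ_inv x \<in> I" if "h \<in> I" for x h
    using that conj_eq_lam[of x h] lam star add_subgroup_add[OF I] by simp
  ultimately have "I \<lhd> G"
    by (rule group.normal_invI[OF group_G])
  then show ?thesis unfolding brace_ideal_def using I lam by simp
qed

lemma brace_ideal_zero: "brace_ideal circ {0}"
  by (rule brace_idealI[OF add_subgroup_singleton_zero]) auto

context
  fixes I assumes I: "brace_ideal circ I"
begin

lemma brace_ideal_subgroup: "add_subgroup I"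
  using I unfolding brace_ideal_def by auto

lemma brace_ideal_lam: "x \<in> I \<Longrightarrow> lam circ a x \<in> I"
  using I unfolding brace_ideal_def by auto

lemma brace_ideal_normal: "I \<lhd> G"
  using I unfolding brace_ideal_def by auto

lemma brace_ideal_conj: "h \<in> I \<Longrightarrow> circ (circ x h) (circ_inv x) \<in> I"
  using normal.inv_op_closed2[OF brace_ideal_normal, of x h] by simp

lemma brace_ideal_circ: "x \<in> I \<Longrightarrow> y \<in> I \<Longrightarrow> circ x y \<in> I"
  using subgroup.m_closed[OF normal_imp_subgroup[OF brace_ideal_normal], of x y] by simp

lemma brace_ideal_circ_inv: "x \<in> I \<Longrightarrow> circ_inv x \<in> I"
  using subgroup.m_inv_closed[OF normal_imp_subgroup[OF brace_ideal_normal], of x] by simp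

lemma brace_ideal_star_left: "x \<in> I \<Longrightarrow> star circ a x \<in> I"
  unfolding star_def using add_subgroup_diff[OF brace_ideal_subgroup] brace_ideal_lam by auto

lemma brace_ideal_star_right:
  assumes x: "x \<in> I" shows "star circ x a \<in> I"
proof -
  have "lam circ (circ_inv a) (x + star circ x a) \<in> I"
    using brace_ideal_conj[OF x, of "circ_inv a"] conj_eq_lam[of "circ_inv a" x]
    by (simp add: group.inv_inv[OF group_G])
  then have "x + star circ x a \<in> I"
    using brace_ideal_lam[of _ a] lam_lam_inv by metis
  then show ?thesis using add_subgroup_add_cancel_left[OF brace_ideal_subgroup] x by blast
qed

end

lemma brace_ideal_right_series: "brace_ideal circ (right_series circ n)"
proof (induction n)
  case 0
  show ?case using brace_idealI[OF add_subgroup_UNIV] by simp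
next
  case (Suc n)
  let ?R = "right_series circ n"
  have "lam circ a (star circ p q) \<in> star_set circ ?R UNIV" if p: "p \<in> ?R" for a p q
  proof -
    define p' where "p' = circ (circ a p) (circ_inv a)"
    have "p' \<in> ?R" unfolding p'_def using brace_ideal_conj[OF Suc p] .
    moreover have "circ a p = circ p' a"
      unfolding p'_def by (simp add: circ_assoc group.l_inv[OF group_G, simplified])
    then have "lam circ a (star circ p q) = star circ p' (star circ a q) + star circ p' q"
      by (simp add: lam_star star_circ_left)
    ultimately show ?thesis
      by (auto intro!: add_subgroup_add[OF add_subgroup_star_set] star_set_mem)
  qed
  moreover have "right_series circ (Suc n) \<subseteq> ?R"
    using star_set_least[OF brace_ideal_subgroup[OF Suc] brace_ideal_star_right[OF Suc]] by simp
  ultimately show ?case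
    by (intro brace_idealI) (auto simp: add_subgroup_star_set intro: lam_star_set star_set_mem)
qed

lemma right_series_Suc_subset: "right_series circ (Suc n) \<subseteq> right_series circ n"
  using star_set_least[OF brace_ideal_subgroup[OF brace_ideal_right_series]
      brace_ideal_star_right[OF brace_ideal_right_series]] by simp

context
  fixes M assumes M: "brace_ideal circ M"
begin

lemma add_subgroup_left_star_power: "add_subgroup (left_star_power circ k M)"
  by (cases k) (simp_all add: brace_ideal_subgroup[OF M] add_subgroup_star_set)

lemma lam_left_star_power: "x \<in> left_star_power circ k M \<Longrightarrow> lam circ a x \<in> left_star_power circ k M"
  by (cases k) (simp_all add: brace_ideal_lam[OF M] lam_star_set_UNIV_left)

lemma left_star_power_subset: "left_star_power circ k M \<subseteq> M"
proof (induction k)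
  case (Suc k)
  have "star_set circ UNIV (left_star_power circ k M) \<subseteq> M"
    by (rule star_set_least[OF brace_ideal_subgroup[OF M]])
      (use Suc brace_ideal_star_left[OF M] in auto)
  then show ?case by simp
qed simp

lemma left_star_power_Suc_subset: "left_star_power circ (Suc k) M \<subseteq> left_star_power circ k M"
  by (induction k) (use left_star_power_subset[of 1] in \<open>simp_all add: star_set_mono\<close>)

end

context
  fixes N M
  assumes N: "brace_ideal circ N" and M: "brace_ideal circ M" and NM: "N \<subseteq> M"
    and right: "\<And>x a. x \<in> M \<Longrightarrow> star circ x a \<in> N"
begin

lemma plus_set_left_star_power_subset: "plus_set N (left_star_power circ k M) \<subseteq> M"
  using plus_set_subset[OF brace_ideal_subgroup[OF M] NM left_star_power_subset[OF M]] .

lemma brace_ideal_plus_set_left_star_power: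
  "brace_ideal circ (plus_set N (left_star_power circ k M))"
proof (rule brace_idealI)
  show "add_subgroup (plus_set N (left_star_power circ k M))"
    by (rule add_subgroup_plus_set[OF brace_ideal_subgroup[OF N] add_subgroup_left_star_power[OF M]])
  fix x a assume x: "x \<in> plus_set N (left_star_power circ k M)"
  then obtain u v where "x = u + v" "u \<in> N" "v \<in> left_star_power circ k M"
    by (rule plus_setE)
  then show "lam circ a x \<in> plus_set N (left_star_power circ k M)"
    by (simp add: lam_add plus_setI brace_ideal_lam[OF N] lam_left_star_power[OF M])
  show "star circ x a \<in> plus_set N (left_star_power circ k M)"
    using x right plus_set_left_star_power_subset
      plus_set_superset_left[OF add_subgroup_zero[OF add_subgroup_left_star_power[OF M]]] by blast
qed

lemma central_mod_plus_set_left_star_power: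
  assumes y: "y \<in> plus_set N (left_star_power circ k M)"
  shows "central_mod circ (plus_set N (left_star_power circ (Suc k) M)) y"
proof -
  let ?T = "plus_set N (left_star_power circ (Suc k) M)"
  have N_T: "N \<subseteq> ?T"
    by (rule plus_set_superset_left[OF add_subgroup_zero[OF add_subgroup_left_star_power[OF M]]])
  obtain u v where uv: "y = u + v" "u \<in> N" "v \<in> left_star_power circ k M"
    using y by (rule plus_setE)
  have "star circ y z \<in> ?T" for z
    using y plus_set_left_star_power_subset right N_T by blast
  moreover have "star circ z y \<in> ?T" for z
    using uv plus_setI[OF brace_ideal_star_left[OF N uv(2)] star_set_mem[OF UNIV_I uv(3)]]
    by (simp add: star_add)
  moreover have "0 \<in> ?T" using N_T add_subgroup_zero[OF brace_ideal_subgroup[OF N]] by blast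
  ultimately show ?thesis unfolding central_mod_def by simp
qed

lemma has_central_series_lift:
  assumes left: "left_star_power circ k M \<subseteq> N" and "has_central_series circ N"
  shows "has_central_series circ M"
proof -
  define T where "T j = plus_set N (left_star_power circ j M)" for j
  have "T k = N"
    using plus_set_subset[OF brace_ideal_subgroup[OF N] _ left] plus_set_superset_left
      add_subgroup_zero[OF add_subgroup_left_star_power[OF M]] unfolding T_def by blast
  have "T 0 = M"
    using plus_set_left_star_power_subset[of 0]
      plus_set_superset_right[OF add_subgroup_zero[OF brace_ideal_subgroup[OF N]]]
    unfolding T_def by auto
  have "has_central_series circ (T j)" if "j \<le> k" for j
    using that
  proof (induction rule: inc_induct)
    case base
    show ?case using \<open>T k = N\<close> assms(2) by simp
  next
    case (step j)
    show ?case
    proof (rule has_central_series_extend[OF step.IH])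
      show "brace_ideal circ (T j)"
        unfolding T_def by (rule brace_ideal_plus_set_left_star_power)
      show "T (Suc j) \<subseteq> T j"
        unfolding T_def by (rule plus_set_mono[OF left_star_power_Suc_subset[OF M]])
      show "central_mod circ (T (Suc j)) y" if "y \<in> T j" for y
        using that unfolding T_def by (rule central_mod_plus_set_left_star_power)
    qed
  qed
  then show ?thesis using \<open>T 0 = M\<close> by force
qed

end

lemma has_central_series_zero: "has_central_series circ {0}"
  unfolding has_central_series_def
  by (rule exI[of _ 0], rule exI[of _ "\<lambda>_. {0}"]) (simp add: brace_ideal_zero)

lemma centrally_nilpotent_if_left_star_powers:
  assumes m: "right_series circ m = {0}"
    and left: "\<And>i. \<exists>k. left_star_power circ k (right_series circ i) \<subseteq> right_series circ (Suc i)"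
  shows "centrally_nilpotent circ"
proof -
  have "has_central_series circ (right_series circ i)" if "i \<le> m" for i
    using that
  proof (induction rule: inc_induct)
    case base
    show ?case using m has_central_series_zero by simp
  next
    case (step i)
    obtain k where "left_star_power circ k (right_series circ i) \<subseteq> right_series circ (Suc i)"
      using left by blast
    then show ?case
      using has_central_series_lift[OF brace_ideal_right_series brace_ideal_right_series
          right_series_Suc_subset _ _ step.IH] star_set_mem[of _ "right_series circ i" _ UNIV]
      by simp
  qed
  from this[of 0] show ?thesis
    using centrally_nilpotent_iff_has_central_series[of circ] by simp
qed

lemma subgroup_lower_central: "subgroup (lower_central G k) G"
  using group.subgroup_self[OF group_G] group.generate_is_subgroup[OF group_G] by (cases k) auto

lemma zero_mem_lower_central: "0 \<in> lower_central G k"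
  using subgroup.one_closed[OF subgroup_lower_central[of k]] by simp

lemma commutator_mem_lower_central:
  "g \<in> lower_central G k \<Longrightarrow> circ (circ (circ y g) (circ_inv y)) (circ_inv g) \<in> lower_central G (Suc k)"
  unfolding lower_central.simps by (rule generate.incl) auto

context
  fixes N M
  assumes N: "brace_ideal circ N" and M: "brace_ideal circ M"
    and right: "\<And>x a. x \<in> M \<Longrightarrow> star circ x a \<in> N"
begin

lemma add_circ_inv_mem: "g \<in> M \<Longrightarrow> g + circ_inv g \<in> N"
  using add_circ_inv[of g] add_subgroup_minus[OF brace_ideal_subgroup[OF N] right] by simp

lemma commutator_minus_star_mem:
  assumes g: "g \<in> M"
  shows "circ (circ (circ y g) (circ_inv y)) (circ_inv g) - star circ y g \<in> N"
proof -
  define w where "w = circ (circ y g) (circ_inv y)"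
  define n where "n = lam circ y (star circ g (circ_inv y))"
  have "w = g + star circ y g + n"
    unfolding w_def n_def conj_eq_lam by (simp add: lam_eq_add_star star_add ac_simps)
  then have "circ w (circ_inv g) - star circ y g = n + (g + circ_inv g) + star circ w (circ_inv g)"
    by (simp add: circ_eq_add_star algebra_simps)
  moreover have "n \<in> N" unfolding n_def using brace_ideal_lam[OF N right[OF g]] .
  moreover have "star circ w (circ_inv g) \<in> N"
    unfolding w_def using right[OF brace_ideal_conj[OF M g]] .
  ultimately show ?thesis
    unfolding w_def using add_circ_inv_mem[OF g] add_subgroup_add[OF brace_ideal_subgroup[OF N]]
    by metis
qed

lemma add_subgroup_near_lower_central:
  "add_subgroup {x. \<exists>g \<in> lower_central G k \<inter> M. x - g \<in> N}"
  unfolding add_subgroup_def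
proof (intro conjI ballI; clarsimp)
  have NS: "add_subgroup N" by (rule brace_ideal_subgroup[OF N])
  show "\<exists>g\<in>lower_central G k \<inter> M. - g \<in> N"
    using zero_mem_lower_central[of k] add_subgroup_zero[OF brace_ideal_subgroup[OF M]]
      add_subgroup_zero[OF NS] by force
  fix x y g1 g2
  assume g: "g1 \<in> lower_central G k" "g1 \<in> M" "x - g1 \<in> N"
    "g2 \<in> lower_central G k" "g2 \<in> M" "y - g2 \<in> N"
  have "x + y - circ g1 g2 = (x - g1) + (y - g2) - star circ g1 g2"
    by (simp add: circ_eq_add_star algebra_simps)
  then have "x + y - circ g1 g2 \<in> N"
    using g right[OF g(2)] add_subgroup_add[OF NS] add_subgroup_diff[OF NS] by metis
  moreover have "circ g1 g2 \<in> lower_central G k \<inter> M"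
    using subgroup.m_closed[OF subgroup_lower_central g(1,4)] brace_ideal_circ[OF M g(2,5)] by simp
  ultimately show "\<exists>g\<in>lower_central G k \<inter> M. x + y - g \<in> N" by blast
  have "- x - circ_inv g1 = - (x - g1) - (g1 + circ_inv g1)"
    by (simp add: algebra_simps)
  then have "- x - circ_inv g1 \<in> N"
    using add_subgroup_diff[OF NS add_subgroup_minus[OF NS g(3)] add_circ_inv_mem[OF g(2)]] by simp
  moreover have "circ_inv g1 \<in> lower_central G k \<inter> M"
    using subgroup.m_inv_closed[OF subgroup_lower_central g(1)] brace_ideal_circ_inv[OF M g(2)]
    by simp
  ultimately show "\<exists>g\<in>lower_central G k \<inter> M. - x - g \<in> N" by blast
qed

lemma left_star_power_near_lower_central:
  "x \<in> left_star_power circ k M \<Longrightarrow> \<exists>g \<in> lower_central G k \<inter> M. x - g \<in> N"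
proof (induction k arbitrary: x)
  case 0
  then show ?case using add_subgroup_zero[OF brace_ideal_subgroup[OF N]] by (intro bexI[of _ x]) auto
next
  case (Suc k)
  from Suc.prems show ?case unfolding left_star_power.simps
  proof (rule star_set_induct[OF _ add_subgroup_near_lower_central])
    fix y x assume "x \<in> left_star_power circ k M"
    then obtain g where g: "g \<in> lower_central G k" "g \<in> M" "x - g \<in> N"
      using Suc.IH by blast
    define c where "c = circ (circ (circ y g) (circ_inv y)) (circ_inv g)"
    have "c \<in> lower_central G (Suc k)"
      unfolding c_def using commutator_mem_lower_central[OF g(1)] .
    moreover have "c \<in> M"
      unfolding c_def using brace_ideal_circ[OF M brace_ideal_conj[OF M g(2)] brace_ideal_circ_inv[OF M g(2)]] .
    moreover have "star circ y x - c = star circ y (x - g) - (c - star circ y g)"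
      by (simp add: star_diff algebra_simps)
    then have "star circ y x - c \<in> N"
      using brace_ideal_star_left[OF N g(3)] commutator_minus_star_mem[OF g(2), of y]
        add_subgroup_diff[OF brace_ideal_subgroup[OF N]] unfolding c_def by metis
    ultimately show "\<exists>g\<in>lower_central G (Suc k) \<inter> M. star circ y x - g \<in> N" by blast
  qed
qed

lemma left_star_power_subset_if_nilpotent:
  assumes "lower_central G k = {0}" shows "left_star_power circ k M \<subseteq> N"
  using left_star_power_near_lower_central[of _ k] assms by auto

end

lemma centrally_nilpotent_if_star_nilpotent:
  assumes "star_nilpotent circ" shows "centrally_nilpotent circ"
proof -
  obtain k m where k: "left_series circ k = {0}" and m: "right_series circ m = {0}"
    using assms unfolding star_nilpotent_def left_star_nilpotent_def right_star_nilpotent_def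
    by blast
  have "left_star_power circ k (right_series circ i) \<subseteq> right_series circ (Suc i)" for i
    using left_star_power_subset_left_series[of circ k "right_series circ i"] k
      zero_mem_right_series[of circ "Suc i"] by auto
  then show ?thesis using centrally_nilpotent_if_left_star_powers[OF m] by blast
qed

lemma centrally_nilpotent_if_nilpotent_group:
  assumes "right_star_nilpotent circ" "nilpotent_group G"
  shows "centrally_nilpotent circ"
proof -
  obtain k where k: "lower_central G k = {0}"
    using assms(2) unfolding nilpotent_group_def by auto
  obtain m where m: "right_series circ m = {0}"
    using assms(1) unfolding right_star_nilpotent_def by blast
  have "left_star_power circ k (right_series circ i) \<subseteq> right_series circ (Suc i)" for i
    by (rule left_star_power_subset_if_nilpotent[OF brace_ideal_right_series brace_ideal_right_series
          _ k]) (simp add: star_set_mem)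
  then show ?thesis using centrally_nilpotent_if_left_star_powers[OF m] by blast
qed

lemma commutator_mem_if_central_mod:
  assumes J: "brace_ideal circ J" and c: "central_mod circ J y"
  shows "circ (circ (circ x y) (circ_inv x)) (circ_inv y) \<in> J"
proof -
  define w where "w = circ (circ x y) (circ_inv x)"
  have "w = y + (star circ x y + lam circ x (star circ y (circ_inv x)))"
    unfolding w_def conj_eq_lam by (simp add: lam_add lam_eq_add_star[of x y] add.assoc)
  moreover have "star circ x y + lam circ x (star circ y (circ_inv x)) \<in> J"
    using c brace_ideal_lam[OF J] add_subgroup_add[OF brace_ideal_subgroup[OF J]]
    unfolding central_mod_def by blast
  ultimately obtain j where j: "j \<in> J" "w = y + j" by blast
  have "circ (circ_inv y) w = lam circ (circ_inv y) j"
    unfolding j(2) circ_add_distrib by (simp add: lam_def)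
  then have "circ (circ_inv y) w \<in> J" using brace_ideal_lam[OF J j(1)] by simp
  moreover have "circ w (circ_inv y) = circ (circ y (circ (circ_inv y) w)) (circ_inv y)"
    by (simp add: circ_assoc[symmetric])
  ultimately show ?thesis using brace_ideal_conj[OF J] unfolding w_def by simp
qed

context
  fixes J S
  assumes J: "brace_ideal circ J" and central: "\<And>x. x \<in> S \<Longrightarrow> central_mod circ J x"
begin

lemma star_set_left_subset_if_central: "star_set circ UNIV S \<subseteq> J"
  using central by (intro star_set_least[OF brace_ideal_subgroup[OF J]]) (auto simp: central_mod_def)

lemma star_set_right_subset_if_central: "star_set circ S UNIV \<subseteq> J"
  using central by (intro star_set_least[OF brace_ideal_subgroup[OF J]]) (auto simp: central_mod_def)

lemma commutator_subgroup_subset_if_central: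
  "generate G {x \<otimes>\<^bsub>G\<^esub> y \<otimes>\<^bsub>G\<^esub> circ_inv x \<otimes>\<^bsub>G\<^esub> circ_inv y |x y. x \<in> carrier G \<and> y \<in> S} \<subseteq> J"
  by (rule group.generate_subgroup_incl[OF group_G _ normal_imp_subgroup[OF brace_ideal_normal[OF J]]])
    (use commutator_mem_if_central_mod[OF J central] in auto)

end

lemma nilpotent_if_centrally_nilpotent:
  assumes "centrally_nilpotent circ"
  shows "left_star_nilpotent circ \<and> right_star_nilpotent circ \<and> nilpotent_group G"
proof -
  obtain n I where I: "I 0 = {0}" "I n = UNIV" "\<forall>j\<le>n. brace_ideal circ (I j)"
     and central: "\<forall>j<n. I j \<subseteq> I (Suc j) \<and> (\<forall>x\<in>I (Suc j). central_mod circ (I j) x)"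
    using assms unfolding centrally_nilpotent_def by (elim exE conjE) (rule that; assumption)
  have J: "brace_ideal circ (I j)" if "j < n" for j
    using that I(3) by simp
  have J_central: "central_mod circ (I j) x" if "j < n" "S \<subseteq> I (Suc j)" "x \<in> S" for j S x
    using that central by blast
  have "left_series circ n \<subseteq> I 0"
  proof (rule subset_chain_descent[where S = "left_series circ" and I = I])
    show "left_series circ (Suc k) \<subseteq> I j" if "j < n" "left_series circ k \<subseteq> I (Suc j)" for k j
      using star_set_left_subset_if_central[OF J J_central, OF that(1) that] by simp
  qed (use I(2) in simp)
  then have "left_series circ n = {0}"
    using I(1) zero_mem_left_series[of circ n] by auto
  moreover have "right_series circ n \<subseteq> I 0"
  proof (rule subset_chain_descent[where S = "right_series circ" and I = I])
    show "right_series circ (Suc k) \<subseteq> I j" if "j < n" "right_series circ k \<subseteq> I (Suc j)" for k j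
      using star_set_right_subset_if_central[OF J J_central, OF that(1) that] by simp
  qed (use I(2) in simp)
  then have "right_series circ n = {0}"
    using I(1) zero_mem_right_series[of circ n] by auto
  moreover have "lower_central G n \<subseteq> I 0"
  proof (rule subset_chain_descent[where S = "lower_central G" and I = I])
    show "lower_central G (Suc k) \<subseteq> I j" if "j < n" "lower_central G k \<subseteq> I (Suc j)" for k j
      using commutator_subgroup_subset_if_central[OF J J_central, OF that(1) that] by simp
  qed (use I(2) in simp)
  then have "lower_central G n = {\<one>\<^bsub>G\<^esub>}"
    using I(1) zero_mem_lower_central[of n] by auto
  ultimately show ?thesis
    unfolding left_star_nilpotent_def right_star_nilpotent_def nilpotent_group_def
    using group_G by (intro conjI exI)
qed

end

theorem mainTheorem9:
  fixes circ :: "'a::ab_group_add \<Rightarrow> 'a \<Rightarrow> 'a"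
  assumes "skew_brace_abelian circ"
  shows "(star_nilpotent circ \<longleftrightarrow>
            right_star_nilpotent circ \<and> nilpotent_group (circ_group circ))
       \<and> (star_nilpotent circ \<longleftrightarrow> centrally_nilpotent circ)"
proof -
  interpret abelian_skew_brace circ by (rule abelian_skew_brace.intro[OF assms])
  show ?thesis
    using nilpotent_if_centrally_nilpotent centrally_nilpotent_if_star_nilpotent
      centrally_nilpotent_if_nilpotent_group
    unfolding star_nilpotent_def by blast
qed

end
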